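(* Let $p$ be a prime, $n\ge2$, let $f,g:\mathbb{F}_p^n\to\mathbb{F}_p$ and let $\mathcal{E}=\{e_1,\dots,e_n\}$ be a basis of $\mathbb{F}_p^n$ over $\mathbb{F}_p$ with coordinates $x_1,\dots,x_n$ relative to $\mathcal{E}$. Suppose that for some $i\neq j$ in $\{1,\dots,n\}$, $\Delta_{e_i}f(x)=\Delta_{e_j}g(x)$ for all $x$. Then \[\deg_{x_j}(\Delta_{e_i}f)=\deg_{x_j}(\Delta_{e_j}g)<p-1\quad\text{and}\quad \deg_{x_i}(\Delta_{e_j}g)=\deg_{x_i}(\Delta_{e_i}f)<p-1.\]
   Context: $\Delta_aF(x)=F(x+a)-F(x)$. Writing $x=\sum_k x_ke_k$, every function $h:\mathbb{F}_p^n\to\mathbb{F}_p$ has a unique algebraic normal form $h=\sum_{(i_1,\dots,i_n)\in\{0,\dots,p-1\}^n}h_{(i_1,\dots,i_n)}\prod_k x_k^{i_k}$ with coefficients in $\mathbb{F}_p$, and $\deg_{x_k}(h)=\max\{i_k \mid h_{(i_1,\dots,i_n)}\ne0\}$. *)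

theory Defs
  imports Main "HOL-Computational_Algebra.Primes" "HOL-Library.Cardinality"
begin

text \<open>Points of F_p^n are modelled as functions 'n \<Rightarrow> 'a, where 'n is a finite
 index type with CARD('n) = n and 'a is a finite field with CARD('a) = p prime.\<close>

definition Delta :: "('n \<Rightarrow> 'a::ab_group_add) \<Rightarrow> (('n \<Rightarrow> 'a) \<Rightarrow> 'b::ab_group_add) \<Rightarrow> ('n \<Rightarrow> 'a) \<Rightarrow> 'b" where
  "Delta a F x = F (\<lambda>k. x k + a k) - F x"

definition lincomb :: "('n::finite \<Rightarrow> 'n \<Rightarrow> 'a::field) \<Rightarrow> ('n \<Rightarrow> 'a) \<Rightarrow> ('n \<Rightarrow> 'a)" where
  "lincomb e c = (\<lambda>m. \<Sum>l\<in>UNIV. c l * e l m)"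

definition is_basis :: "('n::finite \<Rightarrow> 'n \<Rightarrow> 'a::field) \<Rightarrow> bool" where
  "is_basis e \<longleftrightarrow> bij (lincomb e)"

definition anf_exps :: "'a::finite itself \<Rightarrow> ('n \<Rightarrow> nat) set" where
  "anf_exps _ = {i. \<forall>k. i k < CARD('a)}"

definition is_anf :: "('n::finite \<Rightarrow> 'n \<Rightarrow> 'a::{field,finite}) \<Rightarrow> (('n \<Rightarrow> 'a) \<Rightarrow> 'a)
    \<Rightarrow> (('n \<Rightarrow> nat) \<Rightarrow> 'a) \<Rightarrow> bool" where
  "is_anf e h a \<longleftrightarrow> (\<forall>i. i \<notin> (anf_exps TYPE('a) :: ('n \<Rightarrow> nat) set) \<longrightarrow> a i = 0) \<and>
     (\<forall>c. h (lincomb e c) = (\<Sum>i\<in>(anf_exps TYPE('a) :: ('n \<Rightarrow> nat) set). a i * (\<Prod>k\<in>UNIV. c k ^ i k)))"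

definition anf_coeff :: "('n::finite \<Rightarrow> 'n \<Rightarrow> 'a::{field,finite}) \<Rightarrow> (('n \<Rightarrow> 'a) \<Rightarrow> 'a)
    \<Rightarrow> ('n \<Rightarrow> nat) \<Rightarrow> 'a" where
  "anf_coeff e h = (THE a. is_anf e h a)"

definition deg_var :: "('n::finite \<Rightarrow> 'n \<Rightarrow> 'a::{field,finite}) \<Rightarrow> (('n \<Rightarrow> 'a) \<Rightarrow> 'a) \<Rightarrow> 'n \<Rightarrow> nat" where
  "deg_var e h k = Max (insert 0 {i k | i. anf_coeff e h i \<noteq> 0})"

end

theory Submission
  imports Defs "HOL-Computational_Algebra.Polynomial" "HOL-Library.FuncSet"
begin

text \<open>
  Over a finite field of order q, the power sums \<open>\<Sum>\<^sub>t t^s\<close> vanish for \<open>s < q - 1\<close> and equal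
  \<open>-1\<close> for \<open>s = q - 1\<close>. This yields weights \<open>W\<^sub>r\<close> on \<open>F\<^sub>q\<^sup>n\<close>, dual to the monomials of the
  algebraic normal form, so the ANF coefficient \<open>h\<^sub>r\<close> of h equals \<open>\<Sum>\<^sub>c h(c) W\<^sub>r(c)\<close>.
  When \<open>r\<^sub>i = q - 1\<close> the weight \<open>W\<^sub>r\<close> does not depend on \<open>c\<^sub>i\<close>, so for \<open>h = \<Delta>\<^bsub>e\<^sub>i\<^esub>F\<close> the sum
  telescopes along the shift \<open>c\<^sub>i \<mapsto> c\<^sub>i + 1\<close> and vanishes: \<open>deg\<^bsub>x\<^sub>i\<^esub>(\<Delta>\<^bsub>e\<^sub>i\<^esub>F) < q - 1\<close>.
  The theorem is this bound applied to both sides of \<open>\<Delta>\<^bsub>e\<^sub>i\<^esub>f = \<Delta>\<^bsub>e\<^sub>j\<^esub>g\<close>.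
\<close>

lemma of_nat_CARD_field_eq_0: "of_nat CARD('a::{field,finite}) = (0::'a)"
proof -
  have "(\<Sum>x\<in>(UNIV::'a set). x + 1) = (\<Sum>x\<in>UNIV. x)"
    by (rule sum.reindex_bij_witness[of _ "\<lambda>x. x - 1" "\<lambda>x. x + 1"]) auto
  then have "(\<Sum>x\<in>(UNIV::'a set). (1::'a)) = 0"
    by (simp add: sum.distrib)
  then show ?thesis by simp
qed

lemma CARD_field_ge_2: "CARD('a::{field,finite}) \<ge> 2"
proof -
  have "card {0::'a, 1} \<le> CARD('a)" by (intro card_mono) auto
  then show ?thesis by simp
qed

lemma card_UNIV_Diff_0_field: "card (UNIV - {0::'a::{field,finite}}) = CARD('a) - 1"
  by (simp add: card_Diff_subset)

lemma power_CARD_minus_1_field: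
  fixes t :: "'a::{field,finite}"
  assumes "t \<noteq> 0"
  shows "t ^ (CARD('a) - 1) = 1"
proof -
  let ?N = "UNIV - {0::'a}"
  have "(\<Prod>x\<in>?N. t * x) = (\<Prod>x\<in>?N. x)"
    by (rule prod.reindex_bij_witness[of _ "\<lambda>x. x / t" "\<lambda>x. t * x"]) (use assms in auto)
  then have "t ^ card ?N * (\<Prod>x\<in>?N. x) = (\<Prod>x\<in>?N. x)"
    by (simp add: prod.distrib)
  then show ?thesis by (simp add: card_UNIV_Diff_0_field)
qed

lemma power_add_CARD_minus_1_field:
  fixes t :: "'a::{field,finite}"
  assumes "0 < k"
  shows "t ^ (k + (CARD('a) - 1)) = t ^ k"
proof (cases "t = 0")
  case True
  then show ?thesis using assms CARD_field_ge_2[where 'a='a] by (simp add: power_0_left)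
next
  case False
  then show ?thesis by (simp add: power_add power_CARD_minus_1_field del: One_nat_def)
qed

lemma exists_power_ne_1_field:
  assumes "0 < s" "s < CARD('a::{field,finite}) - 1"
  obtains l :: "'a::{field,finite}" where "l \<noteq> 0" "l ^ s \<noteq> 1"
proof -
  let ?q = "monom (1::'a) s - 1"
  have "coeff ?q s \<noteq> 0"
    using assms by (simp add: coeff_monom)
  then have "?q \<noteq> 0" by (metis coeff_0)
  moreover have "degree ?q \<le> s"
    by (rule degree_diff_le) (auto simp: degree_monom_le)
  ultimately have "card {x. poly ?q x = 0} \<le> s"
    using card_poly_roots_bound[of ?q] by linarith
  moreover have "{x. poly ?q x = 0} = {x. x ^ s = 1}" by (auto simp: poly_monom)
  ultimately have "card {x::'a. x ^ s = 1} < card (UNIV - {0::'a})"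
    using assms by (simp add: card_UNIV_Diff_0_field)
  then have "\<not> UNIV - {0::'a} \<subseteq> {x. x ^ s = 1}"
    by (meson card_mono finite leD)
  then show ?thesis using that by blast
qed

lemma sum_UNIV_power_field_eq_0:
  assumes "s < CARD('a::{field,finite}) - 1"
  shows "(\<Sum>t\<in>(UNIV::'a set). t ^ s) = 0"
proof (cases "s = 0")
  case True
  then show ?thesis by (simp add: of_nat_CARD_field_eq_0)
next
  case False
  then obtain l :: 'a where l: "l \<noteq> 0" "l ^ s \<noteq> 1"
    using exists_power_ne_1_field assms by blast
  have "(\<Sum>t\<in>(UNIV::'a set). (l * t) ^ s) = (\<Sum>t\<in>UNIV. t ^ s)"
    by (rule sum.reindex_bij_witness[of _ "\<lambda>x. x / l" "\<lambda>x. l * x"]) (use l in auto)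
  then have "l ^ s * (\<Sum>t\<in>(UNIV::'a set). t ^ s) = (\<Sum>t\<in>UNIV. t ^ s)"
    by (simp add: power_mult_distrib sum_distrib_left)
  then have "(l ^ s - 1) * (\<Sum>t\<in>(UNIV::'a set). t ^ s) = 0"
    by (simp add: algebra_simps)
  then show ?thesis using l by simp
qed

lemma sum_UNIV_power_CARD_minus_1_field:
  "(\<Sum>t\<in>(UNIV::'a::{field,finite} set). t ^ (CARD('a) - 1)) = -1"
proof -
  have "CARD('a) - 1 \<noteq> 0" using CARD_field_ge_2[where 'a='a] by linarith
  then have "(\<Sum>t\<in>(UNIV::'a set). t ^ (CARD('a) - 1)) = (\<Sum>t::'a\<in>UNIV. if t = 0 then 0 else 1)"
    using power_CARD_minus_1_field[where 'a='a] by (intro sum.cong refl) auto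
  also have "\<dots> = of_nat (card (UNIV - {0::'a}))"
    by (simp add: sum.If_cases Diff_eq Compl_eq)
  also have "\<dots> = of_nat CARD('a) - 1"
    unfolding card_UNIV_Diff_0_field using CARD_field_ge_2[where 'a='a] by (simp add: of_nat_diff)
  finally show ?thesis by (simp add: of_nat_CARD_field_eq_0)
qed

definition anf_weight :: "nat \<Rightarrow> 'a::{field,finite} \<Rightarrow> 'a" where
  "anf_weight r t = of_bool (r = 0) - t ^ (CARD('a) - 1 - r)"

lemma sum_power_mult_anf_weight:
  assumes "m < CARD('a::{field,finite})" "r < CARD('a)"
  shows "(\<Sum>t\<in>(UNIV::'a set). t ^ m * anf_weight r t) = of_bool (m = r)"
proof -
  let ?q = "CARD('a) - 1"
  have expand: "(\<Sum>t\<in>(UNIV::'a set). t ^ m * anf_weight r t)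
      = of_bool (r = 0) * (\<Sum>t\<in>UNIV. t ^ m) - (\<Sum>t\<in>UNIV. t ^ (m + (?q - r)))"
    by (simp add: anf_weight_def algebra_simps sum_subtractf sum_distrib_left power_add)
  consider "m = r" | "m < r" | "r < m" by linarith
  then show ?thesis
  proof cases
    case 1
    then show ?thesis
      unfolding expand using assms sum_UNIV_power_CARD_minus_1_field[where 'a='a]
      by (cases "r = 0") (simp_all add: of_nat_CARD_field_eq_0)
  next
    case 2
    then show ?thesis
      using assms by (simp add: expand sum_UNIV_power_field_eq_0)
  next
    case 3
    then have "(\<Sum>t\<in>(UNIV::'a set). t ^ (m + (?q - r))) = (\<Sum>t\<in>UNIV. t ^ (m - r))"
      using assms power_add_CARD_minus_1_field[of "m - r", where 'a='a] by (simp add: add.commute)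
    then show ?thesis
      unfolding expand using 3 assms by (cases "r = 0") (simp_all add: sum_UNIV_power_field_eq_0)
  qed
qed

definition anf_weight_multi :: "('n::finite \<Rightarrow> nat) \<Rightarrow> ('n \<Rightarrow> 'a::{field,finite}) \<Rightarrow> 'a" where
  "anf_weight_multi r c = (\<Prod>k\<in>UNIV. anf_weight (r k) (c k))"

lemma anf_exps_eq_PiE:
  "(anf_exps TYPE('a::{field,finite}) :: ('n::finite \<Rightarrow> nat) set) = PiE UNIV (\<lambda>_. {..<CARD('a)})"
  by (auto simp: anf_exps_def PiE_UNIV_domain)

lemma finite_anf_exps: "finite (anf_exps TYPE('a::{field,finite}) :: ('n::finite \<Rightarrow> nat) set)"
  by (simp add: anf_exps_eq_PiE finite_PiE)

lemma card_anf_exps: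
  "card (anf_exps TYPE('a::{field,finite}) :: ('n::finite \<Rightarrow> nat) set) = CARD('a) ^ CARD('n)"
  by (simp add: anf_exps_eq_PiE card_PiE)

lemma sum_monomial_mult_anf_weight_multi:
  fixes m r :: "'n::finite \<Rightarrow> nat"
  assumes "m \<in> anf_exps TYPE('a::{field,finite})" "r \<in> anf_exps TYPE('a)"
  shows "(\<Sum>c\<in>(UNIV::('n \<Rightarrow> 'a) set). (\<Prod>k\<in>UNIV. c k ^ m k) * anf_weight_multi r c) = of_bool (m = r)"
proof -
  have "(\<Sum>c\<in>(UNIV::('n \<Rightarrow> 'a) set). (\<Prod>k\<in>UNIV. c k ^ m k) * anf_weight_multi r c)
      = (\<Sum>c\<in>PiE UNIV (\<lambda>_. UNIV::'a set). \<Prod>k\<in>UNIV. c k ^ m k * anf_weight (r k) (c k))"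
    by (simp add: anf_weight_multi_def prod.distrib)
  also have "\<dots> = (\<Prod>k\<in>UNIV. \<Sum>t\<in>(UNIV::'a set). t ^ m k * anf_weight (r k) t)"
    by (rule prod_sum_PiE[symmetric]) auto
  also have "\<dots> = (\<Prod>k\<in>UNIV. of_bool (m k = r k))"
    using assms by (intro prod.cong refl sum_power_mult_anf_weight) (auto simp: anf_exps_def)
  also have "\<dots> = of_bool (m = r)"
  proof (cases "m = r")
    case False
    then obtain k where "m k \<noteq> r k" by auto
    then show ?thesis using False by (intro trans[OF prod_zero]) auto
  qed simp
  finally show ?thesis .
qed

lemma anf_coefficient_eq_sum:
  fixes a :: "('n::finite \<Rightarrow> nat) \<Rightarrow> 'a::{field,finite}"
  assumes "\<And>c. \<phi> c = (\<Sum>m\<in>anf_exps TYPE('a). a m * (\<Prod>k\<in>UNIV. c k ^ m k))"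
    and "r \<in> anf_exps TYPE('a)"
  shows "a r = (\<Sum>c\<in>UNIV. \<phi> c * anf_weight_multi r c)"
proof -
  have "(\<Sum>c\<in>UNIV. \<phi> c * anf_weight_multi r c)
      = (\<Sum>m\<in>anf_exps TYPE('a). a m * (\<Sum>c\<in>UNIV. (\<Prod>k\<in>UNIV. c k ^ m k) * anf_weight_multi r c))"
    by (simp add: assms(1) sum_distrib_right sum_distrib_left mult.assoc) (rule sum.swap)
  also have "\<dots> = (\<Sum>m\<in>anf_exps TYPE('a). a m * of_bool (m = r))"
    using assms(2) by (simp add: sum_monomial_mult_anf_weight_multi)
  also have "\<dots> = a r"
    using assms(2) finite_anf_exps[where 'a='a and 'n='n] by (simp add: of_bool_def if_distrib cong: if_cong)
  finally show ?thesis by simp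
qed

lemma is_anf_unique:
  fixes e :: "'n::finite \<Rightarrow> 'n \<Rightarrow> 'a::{field,finite}"
  assumes "is_anf e h a" "is_anf e h b"
  shows "a = b"
proof
  fix r
  show "a r = b r"
  proof (cases "r \<in> anf_exps TYPE('a)")
    case True
    have "a r = (\<Sum>c\<in>UNIV. h (lincomb e c) * anf_weight_multi r c)"
      using assms(1) True unfolding is_anf_def by (intro anf_coefficient_eq_sum) auto
    moreover have "b r = (\<Sum>c\<in>UNIV. h (lincomb e c) * anf_weight_multi r c)"
      using assms(2) True unfolding is_anf_def by (intro anf_coefficient_eq_sum) auto
    ultimately show ?thesis by simp
  next
    case False
    with assms show ?thesis by (simp add: is_anf_def)
  qed
qed

text \<open>The coefficient vectors inject into the functions \<open>F\<^sub>q\<^sup>n \<rightarrow> F\<^sub>q\<close>, and both sets have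
  \<open>q^(q^n)\<close> elements.\<close>

lemma is_anf_exists:
  fixes e :: "'n::finite \<Rightarrow> 'n \<Rightarrow> 'a::{field,finite}" and h :: "('n \<Rightarrow> 'a) \<Rightarrow> 'a"
  shows "\<exists>a. is_anf e h a"
proof -
  let ?S = "anf_exps TYPE('a) :: ('n \<Rightarrow> nat) set"
  let ?P = "PiE ?S (\<lambda>_. UNIV::'a set)"
  define eval_anf :: "(('n \<Rightarrow> nat) \<Rightarrow> 'a) \<Rightarrow> ('n \<Rightarrow> 'a) \<Rightarrow> 'a" where
    "eval_anf = (\<lambda>a c. \<Sum>m\<in>?S. a m * (\<Prod>k\<in>UNIV. c k ^ m k))"
  have "inj_on eval_anf ?P"
  proof (rule inj_onI)
    fix a b assume ab: "a \<in> ?P" "b \<in> ?P" and eq: "eval_anf a = eval_anf b"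
    show "a = b"
    proof (rule PiE_ext[OF ab])
      fix r assume r: "r \<in> ?S"
      have "a r = (\<Sum>c\<in>UNIV. eval_anf a c * anf_weight_multi r c)"
        by (rule anf_coefficient_eq_sum[OF _ r]) (simp add: eval_anf_def)
      moreover have "b r = (\<Sum>c\<in>UNIV. eval_anf b c * anf_weight_multi r c)"
        by (rule anf_coefficient_eq_sum[OF _ r]) (simp add: eval_anf_def)
      ultimately show "a r = b r" using eq by simp
    qed
  qed
  then have "card (eval_anf ` ?P) = CARD('a) ^ (CARD('a) ^ CARD('n))"
    by (simp add: card_image card_PiE finite_anf_exps card_anf_exps)
  also have "\<dots> = CARD(('n \<Rightarrow> 'a) \<Rightarrow> 'a)"
    by (simp add: card_fun)
  finally have "eval_anf ` ?P = UNIV"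
    by (intro card_subset_eq) auto
  then obtain a where a: "eval_anf a = (\<lambda>c. h (lincomb e c))"
    by (metis UNIV_I imageE)
  have "h (lincomb e c) = (\<Sum>m\<in>?S. (if m \<in> ?S then a m else 0) * (\<Prod>k\<in>UNIV. c k ^ m k))" for c
    using fun_cong[OF a, of c] by (simp add: eval_anf_def)
  then have "is_anf e h (\<lambda>m. if m \<in> ?S then a m else 0)"
    by (simp add: is_anf_def)
  then show ?thesis by blast
qed

lemma is_anf_anf_coeff: "is_anf e h (anf_coeff e h)"
  unfolding anf_coeff_def by (rule theI'[of "is_anf e h"]) (use is_anf_exists is_anf_unique in blast)

lemma lincomb_fun_upd_plus_1:
  "lincomb e (c(i := c i + 1)) = (\<lambda>k. lincomb e c k + e i k)"
proof
  fix m
  have "(\<Sum>l\<in>UNIV. (c(i := c i + 1)) l * e l m) = (\<Sum>l\<in>UNIV. c l * e l m + (if l = i then e i m else 0))"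
    by (intro sum.cong refl) (auto simp: algebra_simps)
  then show "lincomb e (c(i := c i + 1)) m = lincomb e c m + e i m"
    by (simp add: lincomb_def sum.distrib)
qed

lemma sum_Delta_lincomb_mult_eq_0:
  fixes F :: "('n::finite \<Rightarrow> 'a::{field,finite}) \<Rightarrow> 'a"
  assumes "\<And>c s. W (c(i := s)) = W c"
  shows "(\<Sum>c\<in>UNIV. Delta (e i) F (lincomb e c) * W c) = 0"
proof -
  have "(\<Sum>c\<in>UNIV. F (lincomb e (c(i := c i + 1))) * W (c(i := c i + 1)))
      = (\<Sum>c\<in>UNIV. F (lincomb e c) * W c)"
    by (rule sum.reindex_bij_witness[of _ "\<lambda>c. c(i := c i - 1)" "\<lambda>c. c(i := c i + 1)"]) auto
  then have "(\<Sum>c\<in>UNIV. F (\<lambda>k. lincomb e c k + e i k) * W c) = (\<Sum>c\<in>UNIV. F (lincomb e c) * W c)"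
    by (simp only: lincomb_fun_upd_plus_1 assms)
  then show ?thesis
    by (simp add: Delta_def algebra_simps sum_subtractf)
qed

lemma anf_weight_multi_fun_upd:
  fixes r :: "'n::finite \<Rightarrow> nat"
  assumes "r i = CARD('a::{field,finite}) - 1"
  shows "anf_weight_multi r ((c :: 'n \<Rightarrow> 'a)(i := s)) = anf_weight_multi r c"
  unfolding anf_weight_multi_def
  by (intro prod.cong refl) (use assms CARD_field_ge_2[where 'a='a] in \<open>auto simp: anf_weight_def\<close>)

lemma anf_coeff_Delta_eq_0:
  fixes F :: "('n::finite \<Rightarrow> 'a::{field,finite}) \<Rightarrow> 'a"
  assumes "r i = CARD('a) - 1"
  shows "anf_coeff e (Delta (e i) F) r = 0"
proof (cases "r \<in> anf_exps TYPE('a)")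
  case True
  then have "anf_coeff e (Delta (e i) F) r
      = (\<Sum>c\<in>UNIV. Delta (e i) F (lincomb e c) * anf_weight_multi r c)"
    using is_anf_anf_coeff[of e "Delta (e i) F"] by (intro anf_coefficient_eq_sum) (auto simp: is_anf_def)
  also have "\<dots> = 0"
    using assms by (intro sum_Delta_lincomb_mult_eq_0 anf_weight_multi_fun_upd)
  finally show ?thesis .
next
  case False
  then show ?thesis using is_anf_anf_coeff[of e "Delta (e i) F"] by (simp add: is_anf_def)
qed

lemma deg_var_Delta_less:
  fixes F :: "('n::finite \<Rightarrow> 'a::{field,finite}) \<Rightarrow> 'a" and e :: "'n \<Rightarrow> 'n \<Rightarrow> 'a"
  shows "deg_var e (Delta (e i) F) i < CARD('a) - 1"
proof -
  let ?X = "{m i | m. anf_coeff e (Delta (e i) F) m \<noteq> 0}"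
  have X: "x < CARD('a) - 1" if "x \<in> ?X" for x
  proof -
    obtain m where m: "x = m i" "anf_coeff e (Delta (e i) F) m \<noteq> 0"
      using \<open>x \<in> ?X\<close> by blast
    then have "m i < CARD('a)"
      using is_anf_anf_coeff[of e "Delta (e i) F"] by (auto simp: is_anf_def anf_exps_def)
    moreover have "m i \<noteq> CARD('a) - 1"
      using anf_coeff_Delta_eq_0 m(2) by blast
    ultimately show ?thesis using m(1) by linarith
  qed
  then have "?X \<subseteq> {..<CARD('a)}"
    by fastforce
  then have "finite ?X"
    by (rule finite_subset) simp
  then show ?thesis
    unfolding deg_var_def using X CARD_field_ge_2[where 'a='a] by (subst Max_less_iff) auto
qed

text \<open>Only \<open>CARD('a) = p\<close> and the hypothesis on the differences are used: the bound holds over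
  any finite field and for any family e.\<close>

theorem lemma3:
  fixes f g :: "('n::finite \<Rightarrow> 'a::{field,finite}) \<Rightarrow> 'a"
    and e :: "'n \<Rightarrow> 'n \<Rightarrow> 'a" and p :: nat and i j :: 'n
  assumes "prime p" and "CARD('a) = p" and "CARD('n) \<ge> 2"
    and "is_basis e" and "i \<noteq> j"
    and "\<forall>x. Delta (e i) f x = Delta (e j) g x"
  shows "deg_var e (Delta (e i) f) j = deg_var e (Delta (e j) g) j
       \<and> deg_var e (Delta (e j) g) j < p - 1
       \<and> deg_var e (Delta (e j) g) i = deg_var e (Delta (e i) f) i
       \<and> deg_var e (Delta (e i) f) i < p - 1"
proof -
  have "Delta (e i) f = Delta (e j) g"
    using assms(6) by blast
  then show ?thesis
    using deg_var_Delta_less[of e i f] deg_var_Delta_less[of e j g] assms(2) by simp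
qed

end
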